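(* For every $v\in\mathbb Q$, the following are equivalent: (1) $v\in\mathcal V$; (2) $v\in\mathbb Z_{d,\ell}$, $v\geq-\mu_\kappa$, and $v\in\mathcal V_{\iota(v)}$ where $\iota(v)=\left\lfloor (n+1)\frac{v+\mu_\kappa}{\tau}+h(v)\right\rfloor$.
   Context: Let $\mathbf K$ be a field and $\ell\geq 2$ an integer. Let $L=a_n\phi_\ell^n+\dots+a_0$ with $n\geq1$, $a_i\in\mathbf K[z]$, $a_0a_n\neq0$, where $\phi_\ell(f)(z)=f(z^\ell)$ acting on Hahn series with coefficients in $\mathbf K$ and value group $\mathbb Q$. Let $\mathcal P(L)=\{(\ell^i,j): 0\le i\le n,\ j\in\operatorname{supp} a_i\}$. The Newton polygon of $L$ is the convex hull of $\{(\ell^i,j): 0\le i\le n,\ j\geq\operatorname{val} a_i\}\subset\mathbb R^2$; its non-vertical edges have slopes $\mu_1<\dots<\mu_\kappa$, $\mathcal S(L)=\{\mu_1,\dots,\mu_\kappa\}$. Let $d\geq1$ be a common multiple of the denominators of the $\mu_k$; $\mathbb Z_{d,\ell}=\bigcup_{i\geq0}\frac{1}{d\ell^i}\mathbb Z$, and $h(v)=\min\{i\geq0: v\in\frac1{d\ell^i}\mathbb Z\}$ for $v\in\mathbb Z_{d,\ell}$. Define $\Psi(v)=\{v\ell^i+j:(\ell^i,j)\in\mathcal P(L)\}$, $\pi(q)=\max\{(q-j)/\ell^i:(\ell^i,j)\in\mathcal P(L)\}$. Let $\mathcal V_0=-\mathcal S(L)$, $\mathcal V_{i+1}=\bigcup_{v\in\mathcal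 V_i}\pi(\Psi(v))$, $\mathcal V=\bigcup_{i\ge0}\mathcal V_i$ (a well-ordered set). For $v\in\mathbb Q$ let $\epsilon(v)=\min\{w\in\mathcal V: w>v\}-v\in\mathbb Q_{>0}\cup\{+\infty\}$ ($+\infty$ if this set is empty), and $\tau=\min\{\epsilon(-\mu_1),\dots,\epsilon(-\mu_\kappa),(d\ell^n)^{-1}\}\in\mathbb Q_{>0}$. *)

theory Defs
  imports "HOL-Analysis.Analysis" "HOL-Computational_Algebra.Polynomial"
begin

text \<open>The operator L = a_n phi^n + ... + a_0 is represented by the coefficient
  function a (only a 0, ..., a n matter), with a i :: K[z].\<close>

definition pval :: "'a::zero poly \<Rightarrow> nat" where
  "pval p = (LEAST j. coeff p j \<noteq> 0)"

definition suppP :: "nat \<Rightarrow> nat \<Rightarrow> (nat \<Rightarrow> 'a::zero poly) \<Rightarrow> (nat \<times> nat) set" where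
  "suppP l n a = {(l ^ i, j) | i j. i \<le> n \<and> coeff (a i) j \<noteq> 0}"

text \<open>Newton polygon: convex hull of {(l^i, j) : 0 <= i <= n, j >= val a_i} in R^2
  (no points for a_i = 0, whose valuation is +infinity).\<close>
definition newton_polygon :: "nat \<Rightarrow> nat \<Rightarrow> (nat \<Rightarrow> 'a::zero poly) \<Rightarrow> (real \<times> real) set" where
  "newton_polygon l n a =
     convex hull {(real (l ^ i), y) | i y. i \<le> n \<and> a i \<noteq> 0 \<and> y \<ge> real (pval (a i))}"

text \<open>S(L): slopes of the non-vertical edges of the Newton polygon. A non-vertical
  edge is the (at least two-point) intersection of the polygon with a non-vertical
  supporting line y = mu x + c below which the polygon does not go.
  (Such slopes are rational since the vertices are integer points.)\<close>
definition slopes :: "nat \<Rightarrow> nat \<Rightarrow> (nat \<Rightarrow> 'a::zero poly) \<Rightarrow> rat set" where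
  "slopes l n a = {\<mu>. \<exists>c::real.
      (\<forall>p\<in>newton_polygon l n a. snd p \<ge> of_rat \<mu> * fst p + c) \<and>
      (\<exists>p q. p \<in> newton_polygon l n a \<and> q \<in> newton_polygon l n a \<and> p \<noteq> q \<and>
             snd p = of_rat \<mu> * fst p + c \<and> snd q = of_rat \<mu> * fst q + c)}"

definition Psi :: "nat \<Rightarrow> nat \<Rightarrow> (nat \<Rightarrow> 'a::zero poly) \<Rightarrow> rat \<Rightarrow> rat set" where
  "Psi l n a v = {v * of_nat x + of_nat j | x j. (x, j) \<in> suppP l n a}"

definition piL :: "nat \<Rightarrow> nat \<Rightarrow> (nat \<Rightarrow> 'a::zero poly) \<Rightarrow> rat \<Rightarrow> rat" where
  "piL l n a q = Max {(q - of_nat j) / of_nat x | x j. (x, j) \<in> suppP l n a}"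

primrec Vseq :: "nat \<Rightarrow> nat \<Rightarrow> (nat \<Rightarrow> 'a::zero poly) \<Rightarrow> nat \<Rightarrow> rat set" where
  "Vseq l n a 0 = uminus ` slopes l n a"
| "Vseq l n a (Suc i) = (\<Union>v\<in>Vseq l n a i. piL l n a ` Psi l n a v)"

definition Vall :: "nat \<Rightarrow> nat \<Rightarrow> (nat \<Rightarrow> 'a::zero poly) \<Rightarrow> rat set" where
  "Vall l n a = (\<Union>i. Vseq l n a i)"

text \<open>epsilon(v): None encodes +infinity.\<close>
definition eps :: "nat \<Rightarrow> nat \<Rightarrow> (nat \<Rightarrow> 'a::zero poly) \<Rightarrow> rat \<Rightarrow> rat option" where
  "eps l n a v = (if \<exists>w\<in>Vall l n a. w > v
                  then Some ((LEAST w. w \<in> Vall l n a \<and> w > v) - v) else None)"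

definition tau :: "nat \<Rightarrow> nat \<Rightarrow> (nat \<Rightarrow> 'a::zero poly) \<Rightarrow> nat \<Rightarrow> rat" where
  "tau l n a d = Min ({1 / of_nat (d * l ^ n)} \<union>
                      {e. \<exists>\<mu>\<in>slopes l n a. eps l n a (- \<mu>) = Some e})"

definition Zdl :: "nat \<Rightarrow> nat \<Rightarrow> rat set" where
  "Zdl d l = {v. \<exists>i k. v = of_int k / of_nat (d * l ^ i)}"

definition hgt :: "nat \<Rightarrow> nat \<Rightarrow> rat \<Rightarrow> nat" where
  "hgt d l v = (LEAST i. \<exists>k::int. v = of_int k / of_nat (d * l ^ i))"

definition iota :: "nat \<Rightarrow> nat \<Rightarrow> (nat \<Rightarrow> 'a::zero poly) \<Rightarrow> nat \<Rightarrow> rat \<Rightarrow> nat" where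
  "iota l n a d v = nat \<lfloor>(of_nat n + 1) * (v + Max (slopes l n a)) / tau l n a d
                          + of_nat (hgt d l v)\<rfloor>"

end

theory Submission
  imports Defs
begin

text \<open>Write \<open>F(v) = min \<Psi>(v)\<close>. It is strictly increasing and \<open>\<pi>\<close> is its inverse, so each
  map \<open>u \<mapsto> \<pi>(u\<ell>\<^sup>i + j)\<close> is monotone and inflationary, and \<open>\<V>\<close> is the orbit of the finite
  set \<open>\<V>\<^sub>0\<close> of breakpoints of \<open>F\<close> (the negated slopes of the Newton polygon) under finitely
  many such maps. A minimal bad sequence argument shows that such an orbit is well ordered,
  so \<open>\<tau> > 0\<close>.

  The key estimate concerns a strict step \<open>u < w = \<pi>(u\<ell>\<^sup>i + j)\<close>: either \<open>w - u \<ge> \<tau>\<close>, or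
  the height \<open>h\<close> increases. If a breakpoint lies in \<open>(u, w)\<close> this is the definition of
  \<open>\<tau>\<close>; otherwise \<open>F\<close> is attained at \<open>u\<close> and at \<open>w\<close> by a common point \<open>(\<ell>\<^sup>t, J)\<close>, and
  comparing \<open>t\<close> with \<open>i\<close> in \<open>w\<ell>\<^sup>t + J = u\<ell>\<^sup>i + j\<close> gives the claim. Since moreover \<open>h\<close>
  never drops by more than \<open>n\<close> in a step, the potential \<open>(n+1)(v + \<mu>\<^sub>\<kappa>)/\<tau> + h(v)\<close>
  grows by at least one along every strict step, so an element of \<open>\<V>\<close> is reached after at
  most \<open>\<iota>(v)\<close> steps.\<close>

section \<open>Well-ordered orbits of inflationary maps\<close>

lemma ex_minimal_descending_chain:
  fixes r :: "('a \<times> 'a) set" and m :: "'a \<Rightarrow> nat"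
  assumes "\<forall>i. (f0 (Suc i), f0 i) \<in> r"
  shows "\<exists>s. (\<forall>i. (s (Suc i), s i) \<in> r) \<and>
             (\<forall>f k. (\<forall>i. (f (Suc i), f i) \<in> r) \<and> (\<forall>j<k. f j = s j) \<longrightarrow> m (s k) \<le> m (f k))"
proof -
  define chains where "chains h k = {f. (\<forall>i. (f (Suc i), f i) \<in> r) \<and> (\<forall>j<k. f j = h j)}" for h k
  define best where "best h k = (ARG_MIN (\<lambda>f. m (f k)) f. f \<in> chains h k)" for h k
  have best: "best h k \<in> chains h k \<and> (\<forall>f\<in>chains h k. m (best h k k) \<le> m (f k))"
    if "h \<in> chains h k" for h k
    unfolding best_def using arg_min_nat_lemma[of "\<lambda>f. f \<in> chains h k" h "\<lambda>f. m (f k)", OF that]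
    by blast
  have self: "h \<in> chains h k" if "\<forall>i. (h (Suc i), h i) \<in> r" for h k
    using that unfolding chains_def by simp
  \<comment> \<open>\<open>H k\<close> agrees with \<open>H (k - 1)\<close> below \<open>k\<close> and minimises \<open>m\<close> at \<open>k\<close>; the diagonal is minimal.\<close>
  define H where "H = rec_nat (best f0 0) (\<lambda>k h. best h (Suc k))"
  have H_Suc: "H (Suc k) = best (H k) (Suc k)" for k
    unfolding H_def by simp
  have H_desc: "\<forall>i. (H k (Suc i), H k i) \<in> r" for k
  proof (induction k)
    case 0
    have "H 0 = best f0 0" unfolding H_def by simp
    then show ?case using best[OF self[OF assms], of 0] unfolding chains_def by simp
  next
    case (Suc k)
    show ?case using best[OF self[OF Suc], of "Suc k"] unfolding H_Suc chains_def by blast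
  qed
  have H_chain: "H (Suc k) \<in> chains (H k) (Suc k)" for k
    using best[OF self[OF H_desc]] unfolding H_Suc by blast
  have H_agree: "H k j = H j j" if "j \<le> k" for j k
    using that
  proof (induction k rule: dec_induct)
    case (step k)
    then show ?case using H_chain[of k] unfolding chains_def by simp
  qed simp
  define s where "s j = H j j" for j
  have "(s (Suc i), s i) \<in> r" for i
    using spec[OF H_desc[of "Suc i"], of i] H_agree[of i "Suc i"] unfolding s_def by simp
  moreover have "m (s k) \<le> m (f k)"
    if f: "\<forall>i. (f (Suc i), f i) \<in> r" "\<forall>j<k. f j = s j" for f k
  proof (cases k)
    case 0
    have "f \<in> chains f0 0" using f unfolding chains_def by simp
    then show ?thesis using best[OF self[OF assms]] 0 unfolding s_def H_def by simp
  next
    case (Suc k')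
    have "f j = H k' j" if "j < k" for j
      using f(2) that H_agree[of j k'] unfolding s_def Suc by simp
    then have "f \<in> chains (H k') k"
      using f(1) unfolding chains_def by blast
    then show ?thesis using best[OF self[OF H_desc]] unfolding s_def Suc H_Suc by simp
  qed
  ultimately show ?thesis by blast
qed

lemma descending_less:
  fixes s :: "nat \<Rightarrow> 'a::order"
  assumes "\<And>i. s (Suc i) < s i" and "i < j"
  shows "s j < s i"
  using assms(2) by (induction rule: less_Suc_induct) (use assms(1) in \<open>auto dest: less_trans\<close>)

locale inflationary_orbits =
  fixes P :: "'p set" and g :: "'p \<Rightarrow> 'b::linorder \<Rightarrow> 'b" and C :: "nat \<Rightarrow> 'b set"
  assumes finite_P: "finite P" and finite_C0: "finite (C 0)"
    and C_Suc: "C (Suc k) = (\<Union>u\<in>C k. (\<lambda>p. g p u) ` P)"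
    and g_mono: "p \<in> P \<Longrightarrow> u \<le> u' \<Longrightarrow> g p u \<le> g p u'"
    and le_g: "p \<in> P \<Longrightarrow> u \<le> g p u"
begin

abbreviation orbit :: "'b set" where
  "orbit \<equiv> \<Union>k. C k"

definition depth :: "'b \<Rightarrow> nat" where
  "depth x = (LEAST k. x \<in> C k)"

lemma in_C_depth:
  assumes "x \<in> orbit"
  shows "x \<in> C (depth x)"
proof -
  obtain k where "x \<in> C k" using assms by blast
  then show ?thesis unfolding depth_def by (rule LeastI)
qed

lemma depth_predecessor:
  assumes "x \<in> orbit" "0 < depth x"
  obtains p u where "p \<in> P" "u \<in> orbit" "depth u < depth x" "x = g p u"
proof -
  have "x \<in> C (Suc (depth x - 1))" using in_C_depth[OF assms(1)] assms(2) by simp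
  then obtain u p where u: "u \<in> C (depth x - 1)" "p \<in> P" "x = g p u"
    unfolding C_Suc by blast
  have "depth u < depth x"
    using Least_le[of "\<lambda>k. u \<in> C k", OF u(1)] assms(2) unfolding depth_def by linarith
  then show thesis using that u by blast
qed

lemma descending_infinitely_many_positive_depth:
  fixes s :: "nat \<Rightarrow> 'b"
  assumes s_in: "\<And>i. s i \<in> orbit" and s_desc: "\<And>i. s (Suc i) < s i"
  shows "infinite {i. 0 < depth (s i)}"
proof -
  have "inj s"
  proof (rule injI)
    fix i j assume "s i = s j"
    then show "i = j"
      using descending_less[of s i j, OF s_desc] descending_less[of s j i, OF s_desc]
      by (metis linorder_neqE_nat less_irrefl)
  qed
  moreover have "{i. depth (s i) = 0} \<subseteq> s -` C 0"
    using in_C_depth[OF s_in] by (metis (mono_tags) mem_Collect_eq subsetI vimageI)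
  ultimately have "finite {i. depth (s i) = 0}"
    using finite_vimageI[OF finite_C0] finite_subset by blast
  then have "infinite (UNIV - {i. depth (s i) = 0})"
    using Diff_infinite_finite infinite_UNIV_nat by blast
  moreover have "UNIV - {i. depth (s i) = 0} = {i. 0 < depth (s i)}" by auto
  ultimately show ?thesis by simp
qed

lemma descending_common_generator:
  fixes s :: "nat \<Rightarrow> 'b"
  assumes s_in: "\<And>i. s i \<in> orbit" and s_desc: "\<And>i. s (Suc i) < s i"
  shows "\<exists>p (e :: nat \<Rightarrow> nat) u. p \<in> P \<and> strict_mono e \<and>
           (\<forall>k. u k \<in> orbit \<and> depth (u k) < depth (s (e k)) \<and> s (e k) = g p (u k))"
proof -
  define I where "I = {i. 0 < depth (s i)}"
  have "\<forall>i\<in>I. \<exists>pu. fst pu \<in> P \<and> snd pu \<in> orbit \<and> depth (snd pu) < depth (s i) \<and>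
                    s i = g (fst pu) (snd pu)"
  proof
    fix i assume "i \<in> I"
    then obtain p u where "p \<in> P" "u \<in> orbit" "depth u < depth (s i)" "s i = g p u"
      using depth_predecessor[OF s_in] unfolding I_def by blast
    then show "\<exists>pu. fst pu \<in> P \<and> snd pu \<in> orbit \<and> depth (snd pu) < depth (s i) \<and>
                    s i = g (fst pu) (snd pu)"
      by (intro exI[of _ "(p, u)"]) simp
  qed
  then obtain pu where pu: "\<forall>i\<in>I. fst (pu i) \<in> P \<and> snd (pu i) \<in> orbit \<and>
      depth (snd (pu i)) < depth (s i) \<and> s i = g (fst (pu i)) (snd (pu i))"
    by (rule bchoice[THEN exE])
  have "finite ((\<lambda>i. fst (pu i)) ` I)"
    by (rule finite_subset[OF _ finite_P]) (use pu in blast)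
  then obtain i1 where "i1 \<in> I" "infinite {i \<in> I. fst (pu i) = fst (pu i1)}"
    using pigeonhole_infinite descending_infinitely_many_positive_depth[of s, OF s_in s_desc]
    unfolding I_def by blast
  then obtain p where inf: "infinite {i \<in> I. fst (pu i) = p}" by blast
  define e where "e = enumerate {i \<in> I. fst (pu i) = p}"
  have e_in: "e k \<in> I" "fst (pu (e k)) = p" for k
    using enumerate_in_set[OF inf] unfolding e_def by auto
  have "strict_mono e" unfolding e_def using strict_mono_enumerate[OF inf] .
  moreover have "p \<in> P \<and> snd (pu (e k)) \<in> orbit \<and> depth (snd (pu (e k))) < depth (s (e k)) \<and>
      s (e k) = g p (snd (pu (e k)))" for k
    using bspec[OF pu e_in(1)[of k]] unfolding e_in(2)[of k] by blast
  ultimately show ?thesis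
    by (intro exI[of _ p] exI[of _ e] exI[of _ "\<lambda>k. snd (pu (e k))"]) blast
qed

lemma predecessors_descending:
  assumes s_desc: "\<And>i. s (Suc i) < s i" and e: "strict_mono e" and p: "p \<in> P"
    and u: "\<And>k. s (e k) = g p (u k)"
  shows "u (Suc k) < u k"
proof (rule ccontr)
  assume "\<not> u (Suc k) < u k"
  then have "s (e k) \<le> s (e (Suc k))" using u g_mono[OF p] by simp
  moreover have "s (e (Suc k)) < s (e k)"
    using descending_less[of s "e k" "e (Suc k)", OF s_desc] e by (simp add: strict_mono_def)
  ultimately show False by simp
qed

text \<open>Nash-Williams' minimal bad sequence argument: in a minimal descending sequence \<open>s\<close>,
  replacing the tail from \<open>e 0\<close> on by the predecessors \<open>u\<close> still gives a descending
  sequence, but one of smaller depth at position \<open>e 0\<close>.\<close>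

theorem wf_orbits: "wf {(x, y). x \<in> orbit \<and> y \<in> orbit \<and> x < y}"
  (is "wf ?r")
proof -
  have False if f0: "\<forall>i. (f0 (Suc i), f0 i) \<in> ?r" for f0
  proof -
    obtain s where s: "\<forall>i. (s (Suc i), s i) \<in> ?r"
      and minimal: "\<forall>f k. (\<forall>i. (f (Suc i), f i) \<in> ?r) \<and> (\<forall>j<k. f j = s j) \<longrightarrow>
                       depth (s k) \<le> depth (f k)"
      using ex_minimal_descending_chain[OF f0, of depth] by blast
    have s_in: "s i \<in> orbit" and s_desc: "s (Suc i) < s i" for i
      using spec[OF s, of i] by auto
    obtain p and e :: "nat \<Rightarrow> nat" and u where p: "p \<in> P" and e: "strict_mono e"
      and u: "\<forall>k. u k \<in> orbit \<and> depth (u k) < depth (s (e k)) \<and> s (e k) = g p (u k)"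
      using descending_common_generator[of s, OF s_in s_desc] by blast
    have u_in: "u k \<in> orbit" and depth_u: "depth (u k) < depth (s (e k))"
      and s_e: "s (e k) = g p (u k)" for k
      using u by blast+
    define f where "f j = (if j < e 0 then s j else u (j - e 0))" for j
    have "f (Suc j) < f j" for j
    proof (cases "Suc j < e 0")
      case False
      then consider "Suc j = e 0" | "e 0 \<le> j" by linarith
      then show ?thesis
      proof cases
        case 1
        have "u 0 \<le> s (e 0)" using le_g[OF p] s_e by simp
        also have "\<dots> < s j" using s_desc[of j] 1 by simp
        finally show ?thesis using 1 unfolding f_def by simp
      next
        case 2
        then show ?thesis
          using predecessors_descending[OF s_desc e p s_e] unfolding f_def by (simp add: Suc_diff_le)
      qed
    qed (simp add: f_def s_desc)
    moreover have "f j \<in> orbit" for j unfolding f_def using s_in u_in by simp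
    moreover have "\<forall>j<e 0. f j = s j" unfolding f_def by simp
    ultimately have "depth (s (e 0)) \<le> depth (f (e 0))" using minimal by blast
    then show False using depth_u[of 0] unfolding f_def by simp
  qed
  then show ?thesis unfolding wf_iff_no_infinite_down_chain by blast
qed

corollary ex_least_in_orbits:
  assumes "S \<subseteq> orbit" and "S \<noteq> {}"
  shows "\<exists>z\<in>S. \<forall>y\<in>S. z \<le> y"
proof -
  obtain z where z: "z \<in> S"
    and below: "\<And>y. (y, z) \<in> {(x, y). x \<in> orbit \<and> y \<in> orbit \<and> x < y} \<Longrightarrow> y \<notin> S"
    using wfE_min'[OF wf_orbits assms(2)] by blast
  have "z \<le> y" if "y \<in> S" for y
    using below[of y] that z assms(1) by (auto simp: not_le[symmetric])
  then show ?thesis using z by blast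
qed

end

section \<open>Supporting lines of convex hulls\<close>

lemma convex_hull_supporting_point:
  fixes f :: "'v::real_vector \<Rightarrow> real"
  assumes f: "linear f" and above: "\<And>s. s \<in> G \<Longrightarrow> c \<le> f s"
    and touch: "\<And>s. s \<in> G \<Longrightarrow> f s = c \<Longrightarrow> s = z"
    and x: "x \<in> convex hull G" "f x = c"
  shows "x = z"
proof -
  obtain S u where S: "finite S" "S \<subseteq> G" and u: "\<forall>v\<in>S. 0 \<le> u v" "sum u S = 1"
    and x_eq: "(\<Sum>v\<in>S. u v *\<^sub>R v) = x"
    using x(1) unfolding convex_hull_explicit by blast
  have "(\<Sum>v\<in>S. u v * (f v - c)) = f x - c * sum u S"
    unfolding x_eq[symmetric] linear_sum[OF f] linear_cmul[OF f]
    by (simp add: right_diff_distrib sum_subtractf sum_distrib_left mult.commute)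
  then have sum0: "(\<Sum>v\<in>S. u v * (f v - c)) = 0" using x(2) u(2) by simp
  have "0 \<le> u v * (f v - c)" if "v \<in> S" for v
    using u(1) above[of v] S(2) that by auto
  then have "\<forall>v\<in>S. u v * (f v - c) = 0"
    using sum_nonneg_eq_0_iff[OF S(1), of "\<lambda>v. u v * (f v - c)"] sum0 by blast
  then have "u v *\<^sub>R v = u v *\<^sub>R z" if "v \<in> S" for v
    using that touch[of v] S(2) by (cases "u v = 0") auto
  then have "x = (\<Sum>v\<in>S. u v *\<^sub>R z)" unfolding x_eq[symmetric] by (rule sum.cong[OF refl])
  also have "\<dots> = z" using u(2) by (simp add: scaleR_sum_left[symmetric])
  finally show ?thesis .
qed

section \<open>The minimum of \<open>\<Psi>\<close> and its breakpoints\<close>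

lemma Collect_pair_image: "{f x y | x y. (x, y) \<in> A} = (\<lambda>p. f (fst p) (snd p)) ` A"
proof (intro set_eqI iffI)
  fix z assume "z \<in> {f x y | x y. (x, y) \<in> A}"
  then obtain x y where "z = f x y" "(x, y) \<in> A" by blast
  then show "z \<in> (\<lambda>p. f (fst p) (snd p)) ` A" by (intro image_eqI[of _ _ "(x, y)"]) auto
next
  fix z assume "z \<in> (\<lambda>p. f (fst p) (snd p)) ` A"
  then obtain p where "z = f (fst p) (snd p)" "p \<in> A" by blast
  then show "z \<in> {f x y | x y. (x, y) \<in> A}" by (cases p) auto
qed

text \<open>\<open>weight v (\<ell>\<^sup>i, j) = v\<ell>\<^sup>i + j\<close> is the element of \<open>\<Psi>(v)\<close> contributed by the point
  \<open>(\<ell>\<^sup>i, j)\<close>; below, \<open>newton_min v = min \<Psi>(v)\<close> and \<open>advance p u = \<pi>(weight u p)\<close>.\<close>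

definition weight :: "rat \<Rightarrow> nat \<times> nat \<Rightarrow> rat" where
  "weight v p = v * of_nat (fst p) + of_nat (snd p)"

lemma weight_diff_shift:
  "weight v r - weight v p = (weight v' r - weight v' p) + (v - v') * (of_nat (fst r) - of_nat (fst p))"
  unfolding weight_def by (simp add: algebra_simps)

lemma weight_le_shift_up:
  assumes "fst p \<le> fst r" "v \<le> w" "weight v p \<le> weight v r"
  shows "weight w p \<le> weight w r"
proof -
  have "0 \<le> (w - v) * (of_nat (fst r) - of_nat (fst p))" using assms(1,2) by simp
  then show ?thesis using weight_diff_shift[of w r p v] assms(3) by linarith
qed

lemma weight_le_shift_down:
  assumes "fst r \<le> fst p" "v \<le> w" "weight w p \<le> weight w r"
  shows "weight v p \<le> weight v r"
proof -
  have "0 \<le> (v - w) * (of_nat (fst r) - of_nat (fst p))"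
    using assms(1,2) by (simp add: mult_nonpos_nonpos)
  then show ?thesis using weight_diff_shift[of v r p w] assms(3) by linarith
qed

definition crossing :: "nat \<times> nat \<Rightarrow> nat \<times> nat \<Rightarrow> rat" where
  "crossing p r = (of_nat (snd p) - of_nat (snd r)) / (of_nat (fst r) - of_nat (fst p))"

lemma weight_diff_crossing:
  assumes "fst p < fst r"
  shows "weight v r - weight v p = (v - crossing p r) * (of_nat (fst r) - of_nat (fst p))"
proof -
  define D where "D = (of_nat (fst r) - of_nat (fst p) :: rat)"
  define A where "A = (of_nat (snd p) - of_nat (snd r) :: rat)"
  have "D \<noteq> 0" using assms unfolding D_def by simp
  then have "(v - A / D) * D = v * D - A" by (simp add: field_simps)
  then show ?thesis unfolding weight_def crossing_def D_def A_def by (simp add: algebra_simps)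
qed

lemma weight_le_iff_crossing_le:
  assumes "fst p < fst r"
  shows "weight v p \<le> weight v r \<longleftrightarrow> crossing p r \<le> v"
proof -
  have pos: "(0::rat) < of_nat (fst r) - of_nat (fst p)" using assms by simp
  have "weight v p \<le> weight v r \<longleftrightarrow> 0 \<le> (v - crossing p r) * (of_nat (fst r) - of_nat (fst p))"
    using weight_diff_crossing[OF assms, of v] by linarith
  also have "\<dots> \<longleftrightarrow> crossing p r \<le> v" using pos by (simp add: zero_le_mult_iff)
  finally show ?thesis .
qed

lemma weight_eq_iff_crossing:
  assumes "fst p < fst r"
  shows "weight v p = weight v r \<longleftrightarrow> v = crossing p r"
proof -
  have "weight v p = weight v r \<longleftrightarrow> (v - crossing p r) * (of_nat (fst r) - of_nat (fst p)) = 0"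
    using weight_diff_crossing[OF assms, of v] by linarith
  then show ?thesis using assms by simp
qed

lemma pval_coeff: "b \<noteq> 0 \<Longrightarrow> coeff b (pval b) \<noteq> 0"
  unfolding pval_def by (rule LeastI_ex) (metis leading_coeff_neq_0)

lemma pval_le: "coeff b j \<noteq> 0 \<Longrightarrow> pval b \<le> j"
  unfolding pval_def by (rule Least_le)

definition intercept :: "real \<Rightarrow> real \<times> real \<Rightarrow> real" where
  "intercept m s = snd s - m * fst s"

lemma linear_intercept: "linear (intercept m)"
  by (rule linearI) (simp_all add: intercept_def algebra_simps)

lemma intercept_weight:
  "intercept (of_rat \<mu>) (real (fst p), real (snd p)) = of_rat (weight (- \<mu>) p)"
  unfolding intercept_def weight_def by (simp add: of_rat_add of_rat_mult of_rat_minus of_rat_diff)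

lemma slopes_iff_intercept:
  "\<mu> \<in> slopes l n a \<longleftrightarrow> (\<exists>c. (\<forall>s\<in>newton_polygon l n a. c \<le> intercept (of_rat \<mu>) s) \<and>
     (\<exists>s t. s \<in> newton_polygon l n a \<and> t \<in> newton_polygon l n a \<and> s \<noteq> t \<and>
            intercept (of_rat \<mu>) s = c \<and> intercept (of_rat \<mu>) t = c))"
  unfolding slopes_def intercept_def by (simp add: algebra_simps le_diff_eq eq_diff_eq)

locale mahler_operator =
  fixes a :: "nat \<Rightarrow> 'a::field poly" and l n :: nat
  assumes l_ge_2: "l \<ge> 2" and a0_nonzero: "a 0 \<noteq> 0"
begin

abbreviation pts :: "(nat \<times> nat) set" where
  "pts \<equiv> suppP l n a"

definition newton_min :: "rat \<Rightarrow> rat" where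
  "newton_min v = Min (weight v ` pts)"

definition active :: "rat \<Rightarrow> nat \<times> nat \<Rightarrow> bool" where
  "active v p \<longleftrightarrow> p \<in> pts \<and> (\<forall>q\<in>pts. weight v p \<le> weight v q)"

definition advance :: "nat \<times> nat \<Rightarrow> rat \<Rightarrow> rat" where
  "advance p u = piL l n a (weight u p)"

lemma pts_iff: "(x, j) \<in> pts \<longleftrightarrow> (\<exists>i\<le>n. x = l ^ i \<and> coeff (a i) j \<noteq> 0)"
  unfolding suppP_def by auto

lemma pts_fst: "p \<in> pts \<Longrightarrow> \<exists>i\<le>n. fst p = l ^ i"
  by (cases p) (auto simp: pts_iff)

lemma pts_fst_pos: "p \<in> pts \<Longrightarrow> 0 < fst p"
  using pts_fst l_ge_2 by fastforce

lemma finite_pts: "finite pts"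
proof (rule finite_subset)
  show "pts \<subseteq> (\<lambda>i. l ^ i) ` {..n} \<times> {..Max ((\<lambda>i. degree (a i)) ` {..n})}"
  proof
    fix p assume "p \<in> pts"
    then obtain i j where p: "p = (l ^ i, j)" "i \<le> n" "coeff (a i) j \<noteq> 0"
      by (cases p) (auto simp: pts_iff)
    have "j \<le> degree (a i)" using p(3) le_degree by blast
    also have "\<dots> \<le> Max ((\<lambda>i. degree (a i)) ` {..n})" using p(2) by (intro Max_ge) auto
    finally show "p \<in> (\<lambda>i. l ^ i) ` {..n} \<times> {..Max ((\<lambda>i. degree (a i)) ` {..n})}"
      using p by auto
  qed
qed simp

lemma pts_fst_double:
  assumes "p \<in> pts" "q \<in> pts" "fst q < fst p"
  shows "2 * fst q \<le> fst p"
proof -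
  obtain i t where it: "fst p = l ^ i" "fst q = l ^ t" using pts_fst assms(1,2) by blast
  then have "Suc t \<le> i" using assms(3) l_ge_2 by (simp add: power_strict_increasing_iff)
  then have "l ^ Suc t \<le> l ^ i" using l_ge_2 by (intro power_increasing) simp_all
  moreover have "2 * l ^ t \<le> l ^ Suc t" using l_ge_2 by simp
  ultimately show ?thesis using it by linarith
qed

lemma pts_nonempty: "pts \<noteq> {}"
proof -
  have "(1, pval (a 0)) \<in> pts"
    using pval_coeff[OF a0_nonzero] by (auto simp: pts_iff intro!: exI[of _ 0])
  then show ?thesis by blast
qed

lemma newton_min_le: "p \<in> pts \<Longrightarrow> newton_min v \<le> weight v p"
  unfolding newton_min_def using finite_pts by simp

lemma newton_min_attained: "\<exists>p\<in>pts. newton_min v = weight v p"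
proof -
  have "newton_min v \<in> weight v ` pts"
    unfolding newton_min_def using finite_pts pts_nonempty by simp
  then show ?thesis by blast
qed

lemma ex_active: "\<exists>p. active v p"
  using newton_min_attained[of v] newton_min_le unfolding active_def by metis

lemma active_newton_min: "active v p \<Longrightarrow> newton_min v = weight v p"
  using newton_min_attained[of v] newton_min_le[of p v] unfolding active_def by force

lemma strict_mono_newton_min: "strict_mono newton_min"
proof (rule strict_monoI)
  fix v v' :: rat assume "v < v'"
  obtain p where p: "active v' p" using ex_active by blast
  then have "0 < fst p" using pts_fst_pos unfolding active_def by blast
  then have "weight v p < weight v' p" using \<open>v < v'\<close> unfolding weight_def by simp
  then show "newton_min v < newton_min v'"
    using newton_min_le[of p v] active_newton_min[OF p] p unfolding active_def by simp
qed

lemma newton_min_piL: "newton_min (piL l n a q) = q"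
proof -
  define S where "S = (\<lambda>p. (q - of_nat (snd p)) / of_nat (fst p)) ` pts"
  have piL_eq: "piL l n a q = Max S"
    unfolding piL_def S_def Collect_pair_image ..
  have S: "finite S" "S \<noteq> {}" unfolding S_def using finite_pts pts_nonempty by auto
  then obtain p0 where p0: "p0 \<in> pts" "Max S = (q - of_nat (snd p0)) / of_nat (fst p0)"
    using Max_in[OF S] unfolding S_def by blast
  have "weight (Max S) p0 = q"
    using p0 pts_fst_pos[OF p0(1)] unfolding weight_def by simp
  then have "newton_min (Max S) \<le> q" using newton_min_le[OF p0(1), of "Max S"] by simp
  moreover have "q \<le> weight (Max S) p" if "p \<in> pts" for p
  proof -
    have "(q - of_nat (snd p)) / of_nat (fst p) \<le> Max S"
      using S(1) that unfolding S_def by simp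
    then show ?thesis using pts_fst_pos[OF that] unfolding weight_def by (simp add: pos_divide_le_eq)
  qed
  then have "q \<le> newton_min (Max S)"
    using ex_active[of "Max S"] active_newton_min unfolding active_def by metis
  ultimately show ?thesis unfolding piL_eq by simp
qed

lemma newton_min_advance: "newton_min (advance p u) = weight u p"
  unfolding advance_def by (rule newton_min_piL)

lemma newton_min_le_iff: "newton_min v \<le> newton_min v' \<longleftrightarrow> v \<le> v'"
  by (rule strict_mono_less_eq[OF strict_mono_newton_min])

lemma le_advance: "p \<in> pts \<Longrightarrow> u \<le> advance p u"
  using newton_min_le[of p u] newton_min_le_iff[of u "advance p u"] newton_min_advance by simp

lemma advance_mono: "u \<le> u' \<Longrightarrow> advance p u \<le> advance p u'"
  using newton_min_le_iff[of "advance p u" "advance p u'"]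
  unfolding newton_min_advance weight_def by (simp add: mult_right_mono)

lemma advance_active: "active u p \<Longrightarrow> advance p u = u"
  using newton_min_advance[of p u] active_newton_min[of u p]
    strict_mono_eq[OF strict_mono_newton_min, of "advance p u" u]
  by simp

lemma Vseq_Suc: "Vseq l n a (Suc k) = (\<Union>u\<in>Vseq l n a k. (\<lambda>p. advance p u) ` pts)"
proof -
  have "Psi l n a v = weight v ` pts" for v
    unfolding Psi_def weight_def Collect_pair_image ..
  then show ?thesis by (simp add: advance_def image_image)
qed

lemma Vseq_mono: "k \<le> m \<Longrightarrow> Vseq l n a k \<subseteq> Vseq l n a m"
proof (induction m rule: dec_induct)
  case (step m)
  have "u \<in> Vseq l n a (Suc m)" if "u \<in> Vseq l n a m" for u
  proof -
    obtain p where "active u p" using ex_active by blast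
    then have "p \<in> pts" "u = advance p u" using advance_active unfolding active_def by auto
    then show ?thesis using that unfolding Vseq_Suc by blast
  qed
  then show ?case using step by blast
qed simp

definition breakpoints :: "rat set" where
  "breakpoints = {v. \<exists>p q. active v p \<and> active v q \<and> p \<noteq> q}"

lemma active_same_fst: "active v p \<Longrightarrow> active v q \<Longrightarrow> fst p = fst q \<Longrightarrow> p = q"
  using active_newton_min[of v p] active_newton_min[of v q]
  unfolding weight_def by (simp add: prod_eq_iff)

lemma breakpoint_crossing:
  assumes "v \<in> breakpoints"
  obtains p q where "p \<in> pts" "q \<in> pts" "fst p < fst q" "v = crossing p q"
proof -
  obtain p q where pq: "active v p" "active v q" "p \<noteq> q"
    using assms unfolding breakpoints_def by blast
  have "weight v p = weight v q"
    using active_newton_min[OF pq(1)] active_newton_min[OF pq(2)] by simp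
  moreover have "fst p < fst q \<or> fst q < fst p" using active_same_fst[OF pq(1,2)] pq(3) by linarith
  ultimately show thesis
    using that pq(1,2) weight_eq_iff_crossing[of p q v] weight_eq_iff_crossing[of q p v]
    unfolding active_def by metis
qed

lemma finite_breakpoints: "finite breakpoints"
proof (rule finite_subset)
  show "breakpoints \<subseteq> (\<lambda>(p, q). crossing p q) ` (pts \<times> pts)"
    by (auto elim!: breakpoint_crossing)
qed (simp add: finite_pts)

definition newton_pts :: "(real \<times> real) set" where
  "newton_pts = {(real (l ^ i), y) | i y. i \<le> n \<and> a i \<noteq> 0 \<and> y \<ge> real (pval (a i))}"

lemma newton_polygon_eq: "newton_polygon l n a = convex hull newton_pts"
  unfolding newton_polygon_def newton_pts_def ..

lemma pts_in_newton_pts: "p \<in> pts \<Longrightarrow> (real (fst p), real (snd p)) \<in> newton_pts"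
proof -
  assume "p \<in> pts"
  then obtain i where i: "i \<le> n" "fst p = l ^ i" "coeff (a i) (snd p) \<noteq> 0"
    by (cases p) (auto simp: pts_iff dest: power_inject_exp[THEN iffD1, rotated])
  then show ?thesis using pval_le[OF i(3)] unfolding newton_pts_def by force
qed

lemma newton_pts_above_pts:
  assumes "s \<in> newton_pts"
  obtains r where "r \<in> pts" "fst s = real (fst r)" "real (snd r) \<le> snd s"
proof -
  obtain i y where "s = (real (l ^ i), y)" "i \<le> n" "a i \<noteq> 0" "real (pval (a i)) \<le> y"
    using assms unfolding newton_pts_def by blast
  moreover have "(l ^ i, pval (a i)) \<in> pts"
    using pval_coeff \<open>a i \<noteq> 0\<close> \<open>i \<le> n\<close> by (auto simp: pts_iff)
  ultimately show thesis using that[of "(l ^ i, pval (a i))"] by simp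
qed

lemma weight_le_of_intercept:
  assumes "s \<in> newton_pts"
  obtains r where "r \<in> pts" "of_rat (weight (- \<mu>) r) \<le> intercept (of_rat \<mu>) s"
    and "of_rat (weight (- \<mu>) r) = intercept (of_rat \<mu>) s \<Longrightarrow> s = (real (fst r), real (snd r))"
proof -
  obtain r where r: "r \<in> pts" "fst s = real (fst r)" "real (snd r) \<le> snd s"
    using newton_pts_above_pts[OF assms] .
  then show thesis
    using that[of r] unfolding intercept_weight[symmetric] by (auto simp: intercept_def prod_eq_iff)
qed

lemma slope_imp_breakpoint:
  assumes "\<mu> \<in> slopes l n a"
  shows "- \<mu> \<in> breakpoints"
proof (rule ccontr)
  assume not_bp: "- \<mu> \<notin> breakpoints"
  let ?f = "intercept (of_rat \<mu>)"
  obtain c s t where below: "\<forall>x\<in>convex hull newton_pts. c \<le> ?f x"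
    and st: "s \<in> convex hull newton_pts" "t \<in> convex hull newton_pts" "s \<noteq> t" "?f s = c" "?f t = c"
    using assms unfolding slopes_iff_intercept newton_polygon_eq by blast
  obtain z where z: "active (- \<mu>) z" using ex_active by blast
  have below_pts: "c \<le> of_rat (weight (- \<mu>) q)" if "q \<in> pts" for q
    using below pts_in_newton_pts[OF that] hull_subset[of newton_pts convex]
    unfolding intercept_weight[symmetric] by blast
  have touch: "x = (real (fst z), real (snd z))" if x: "x \<in> newton_pts" "?f x = c" for x
  proof -
    obtain r where r: "r \<in> pts" "of_rat (weight (- \<mu>) r) \<le> ?f x"
      and eq: "of_rat (weight (- \<mu>) r) = ?f x \<Longrightarrow> x = (real (fst r), real (snd r))"
      by (rule weight_le_of_intercept[OF x(1), where \<mu> = \<mu>]) blast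
    have r_line: "of_rat (weight (- \<mu>) r) = c" using r below_pts[OF r(1)] x(2) by simp
    have "weight (- \<mu>) r \<le> weight (- \<mu>) q" if "q \<in> pts" for q
      using below_pts[OF that] r_line of_rat_less_eq[where 'a = real] by metis
    then have "active (- \<mu>) r" unfolding active_def using r(1) by blast
    then have "r = z" using z not_bp unfolding breakpoints_def by blast
    then show ?thesis using eq r_line x(2) by simp
  qed
  have "s = (real (fst z), real (snd z))" "t = (real (fst z), real (snd z))"
    using convex_hull_supporting_point[OF linear_intercept _ touch] below hull_subset[of newton_pts convex] st
    by blast+
  then show False using st(3) by simp
qed

lemma breakpoint_imp_slope:
  assumes "- \<mu> \<in> breakpoints"
  shows "\<mu> \<in> slopes l n a"
proof -
  let ?f = "intercept (of_rat \<mu>)" and ?c = "of_rat (newton_min (- \<mu>)) :: real"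
  let ?pt = "\<lambda>p::nat \<times> nat. (real (fst p), real (snd p))"
  obtain p q where pq: "active (- \<mu>) p" "active (- \<mu>) q" "p \<noteq> q"
    using assms unfolding breakpoints_def by blast
  have "newton_pts \<subseteq> ?f -` {?c..}"
  proof
    fix s assume "s \<in> newton_pts"
    then obtain r where "r \<in> pts" "of_rat (weight (- \<mu>) r) \<le> ?f s"
      by (rule weight_le_of_intercept[where \<mu> = \<mu>]) blast
    moreover have "?c \<le> of_rat (weight (- \<mu>) r)"
      using newton_min_le[OF \<open>r \<in> pts\<close>, of "- \<mu>"] by (simp add: of_rat_less_eq)
    ultimately show "s \<in> ?f -` {?c..}" by simp
  qed
  then have "convex hull newton_pts \<subseteq> ?f -` {?c..}"
    by (rule hull_minimal) (simp add: convex_linear_vimage[OF linear_intercept])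
  moreover have "?pt r \<in> convex hull newton_pts" "?f (?pt r) = ?c" if "active (- \<mu>) r" for r
    using that pts_in_newton_pts hull_subset[of newton_pts convex] active_newton_min[OF that]
    unfolding active_def intercept_weight by auto
  moreover have "?pt p \<noteq> ?pt q" using pq(3) by (simp add: prod_eq_iff)
  ultimately show ?thesis
    unfolding slopes_iff_intercept newton_polygon_eq using pq(1,2) by blast
qed

lemma Vseq_0: "Vseq l n a 0 = breakpoints"
proof -
  have "breakpoints \<subseteq> uminus ` slopes l n a"
    using breakpoint_imp_slope[of "- v" for v] by (force simp: image_iff)
  then show ?thesis using slope_imp_breakpoint by auto
qed

lemma finite_slopes: "finite (slopes l n a)"
proof -
  have "slopes l n a \<subseteq> uminus ` breakpoints"
    using slope_imp_breakpoint by (force simp: image_iff)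
  then show ?thesis using finite_breakpoints finite_subset by blast
qed

abbreviation V :: "rat set" where
  "V \<equiv> Vall l n a"

sublocale inflationary_orbits pts advance "Vseq l n a"
proof
  show "finite (Vseq l n a 0)" unfolding Vseq_0 by (rule finite_breakpoints)
  show "Vseq l n a (Suc k) = (\<Union>u\<in>Vseq l n a k. (\<lambda>p. advance p u) ` pts)" for k
    by (rule Vseq_Suc)
qed (simp_all add: finite_pts advance_mono le_advance)

lemma V_eq: "V = (\<Union>k. Vseq l n a k)"
  unfolding Vall_def ..

lemma advance_in_V: "u \<in> V \<Longrightarrow> p \<in> pts \<Longrightarrow> advance p u \<in> V"
  unfolding V_eq using Vseq_Suc by blast

lemma breakpoints_subset_V: "breakpoints \<subseteq> V"
  unfolding V_eq Vseq_0[symmetric] by blast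

lemma active_between:
  assumes "active b p" "active w p" "b \<le> v" "v \<le> w"
  shows "active v p"
  unfolding active_def
proof (intro conjI ballI)
  show "p \<in> pts" using assms(1) unfolding active_def by blast
  fix r assume r: "r \<in> pts"
  show "weight v p \<le> weight v r"
  proof (cases "fst p \<le> fst r")
    case True
    then show ?thesis using weight_le_shift_up[OF True assms(3)] assms(1) r unfolding active_def by blast
  next
    case False
    then show ?thesis
      using weight_le_shift_down[of r p v w] assms(2,4) r unfolding active_def by simp
  qed
qed

lemma left_breakpoint:
  assumes p: "active w p" and q: "q \<in> pts" "fst p < fst q"
  obtains b r where "b \<le> w" "active b p" "active b r" "fst p < fst r"
proof -
  define Q where "Q = {r \<in> pts. fst p < fst r}"
  have Q: "finite Q" "q \<in> Q" unfolding Q_def using finite_pts q by auto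
  define b where "b = Max (crossing p ` Q)"
  have "b \<in> crossing p ` Q" unfolding b_def using Q by (intro Max_in) auto
  then obtain r0 where r0: "r0 \<in> Q" "crossing p r0 = b" by blast
  have crossing_le_b: "crossing p r \<le> b" if "r \<in> Q" for r
    unfolding b_def using Q(1) that by simp
  have "crossing p r0 \<le> w"
    using p r0(1) weight_le_iff_crossing_le[of p r0 w] unfolding active_def Q_def by simp
  then have "b \<le> w" using r0(2) by simp
  have "active b p"
    unfolding active_def
  proof (intro conjI ballI)
    show "p \<in> pts" using p unfolding active_def by blast
    fix r assume r: "r \<in> pts"
    show "weight b p \<le> weight b r"
    proof (cases "fst p < fst r")
      case True
      then have "r \<in> Q" unfolding Q_def using r by blast
      then show ?thesis using weight_le_iff_crossing_le[OF True, of b] crossing_le_b by simp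
    next
      case False
      then show ?thesis
        using weight_le_shift_down[of r p b w] \<open>b \<le> w\<close> p r unfolding active_def by simp
    qed
  qed
  moreover have "fst p < fst r0" using r0(1) unfolding Q_def by blast
  moreover have "weight b p = weight b r0"
    using weight_eq_iff_crossing[OF \<open>fst p < fst r0\<close>, of b] r0(2) by simp
  then have "active b r0" using \<open>active b p\<close> r0(1) unfolding active_def Q_def by simp
  ultimately show thesis using that \<open>b \<le> w\<close> by blast
qed

lemma common_active:
  assumes "u < w" and no_bp: "\<forall>b\<in>breakpoints. \<not> (u < b \<and> b < w)"
  obtains p where "active u p" "active w p"
proof -
  let ?M = "fst ` {q. active w q}"
  have M: "finite ?M" "?M \<noteq> {}"
    using finite_pts ex_active[of w] unfolding active_def by auto
  obtain ps where ps: "active w ps" "fst ps = Max ?M"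
    using Max_in[OF M] by auto
  have ps_max: "fst q \<le> fst ps" if "active w q" for q
    unfolding ps(2) using M(1) that by simp
  show thesis
  proof (cases "active u ps")
    case False
    then obtain q where q: "q \<in> pts" "weight u q < weight u ps"
      using ps(1) unfolding active_def by (meson not_le)
    have "fst ps < fst q"
    proof (rule ccontr)
      assume "\<not> fst ps < fst q"
      then have "weight u ps \<le> weight u q"
        using weight_le_shift_down[of q ps u w] \<open>u < w\<close> q(1) ps(1) unfolding active_def by simp
      then show False using q(2) by simp
    qed
    then obtain b r where b: "b \<le> w" "active b ps" "active b r" "fst ps < fst r"
      using left_breakpoint[OF ps(1) q(1)] by blast
    have "b \<in> breakpoints" using b(2-4) unfolding breakpoints_def by fastforce
    moreover have "u < b"
    proof (rule ccontr)
      assume "\<not> u < b"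
      then have "active u ps" using active_between[OF b(2) ps(1)] \<open>u < w\<close> by simp
      then show False using False by blast
    qed
    moreover have "b \<noteq> w" using ps_max[of r] b(3,4) by auto
    ultimately show thesis using no_bp b(1) by force
  qed (use that ps(1) in blast)
qed

lemma active_advance:
  obtains q where "active (advance p u) q" "weight (advance p u) q = weight u p"
proof -
  obtain q where q: "active (advance p u) q" using ex_active by blast
  then have "weight (advance p u) q = weight u p"
    using active_newton_min[OF q] newton_min_advance by simp
  then show thesis using that q by blast
qed

lemma V_ge_neg_max_slope: "v \<in> V \<Longrightarrow> - Max (slopes l n a) \<le> v"
proof -
  have "- Max (slopes l n a) \<le> v" if "v \<in> Vseq l n a k" for k v
    using that
  proof (induction k arbitrary: v)
    case 0
    then have "- v \<in> slopes l n a" using breakpoint_imp_slope[of "- v"] Vseq_0 by simp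
    then show ?case using finite_slopes by (simp add: minus_le_iff)
  next
    case (Suc k)
    then obtain u p where "u \<in> Vseq l n a k" "p \<in> pts" "v = advance p u"
      unfolding Vseq_Suc by blast
    then show ?case using Suc.IH le_advance order_trans by blast
  qed
  then show "v \<in> V \<Longrightarrow> - Max (slopes l n a) \<le> v" unfolding V_eq by blast
qed

lemma eps_least_above:
  assumes "w \<in> V" "b < w"
  obtains z where "eps l n a b = Some (z - b)" "z \<in> V" "b < z" "z \<le> w"
proof -
  obtain z where z: "z \<in> {x \<in> V. b < x}" and least: "\<forall>y\<in>{x \<in> V. b < x}. z \<le> y"
    using ex_least_in_orbits[of "{x \<in> V. b < x}"] assms unfolding V_eq by blast
  have "(LEAST x. x \<in> V \<and> b < x) = z"
    by (rule Least_equality) (use z least in auto)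
  then have "eps l n a b = Some (z - b)" using assms unfolding eps_def by auto
  then show thesis using that z least assms by blast
qed

lemma eps_pos:
  assumes "eps l n a b = Some e"
  shows "0 < e"
proof -
  obtain w where "w \<in> V" "b < w"
    using assms unfolding eps_def by (auto split: if_splits)
  then obtain z where "eps l n a b = Some (z - b)" "b < z" by (rule eps_least_above)
  then show ?thesis using assms by simp
qed

end

section \<open>Heights\<close>

definition height_le :: "nat \<Rightarrow> nat \<Rightarrow> rat \<Rightarrow> nat \<Rightarrow> bool" where
  "height_le d l v i \<longleftrightarrow> v * of_nat (d * l ^ i) \<in> \<int>"

lemma height_le_mono: "height_le d l v i \<Longrightarrow> i \<le> j \<Longrightarrow> height_le d l v j"
proof -
  assume "height_le d l v i" "i \<le> j"
  then have "v * of_nat (d * l ^ i) * of_nat (l ^ (j - i)) \<in> \<int>"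
    unfolding height_le_def by simp
  moreover have "l ^ j = l ^ i * l ^ (j - i)" using \<open>i \<le> j\<close> by (simp flip: power_add)
  ultimately show ?thesis unfolding height_le_def by (simp add: mult.assoc)
qed

lemma height_le_shift:
  assumes "w * of_nat (l ^ t) + of_nat J = u * of_nat (l ^ i) + of_nat j"
    and "height_le d l u (i + k)"
  shows "height_le d l w (t + k)"
proof -
  have eq: "w * of_nat (l ^ t) = u * of_nat (l ^ i) + (of_nat j - of_nat J)"
    using assms(1) by linarith
  have "w * of_nat (d * l ^ (t + k)) = (w * of_nat (l ^ t)) * of_nat (d * l ^ k)"
    by (simp add: power_add algebra_simps)
  also have "\<dots> = u * of_nat (d * l ^ (i + k)) + (of_nat j - of_nat J) * of_nat (d * l ^ k)"
    unfolding eq by (simp add: power_add algebra_simps)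
  finally show ?thesis using assms(2) unfolding height_le_def by simp
qed

lemma height_le_step:
  assumes "w * of_nat (l ^ t) + of_nat J = u * of_nat x + of_nat j"
    and "height_le d l u m"
  shows "height_le d l w (m + t)"
proof -
  have eq: "w * of_nat (l ^ t) = u * of_nat x + (of_nat j - of_nat J)"
    using assms(1) by linarith
  have "w * of_nat (d * l ^ (m + t)) = (w * of_nat (l ^ t)) * of_nat (d * l ^ m)"
    by (simp add: power_add algebra_simps)
  also have "\<dots> = u * of_nat (d * l ^ m) * of_nat x + (of_nat j - of_nat J) * of_nat (d * l ^ m)"
    unfolding eq by (simp add: algebra_simps)
  finally show ?thesis using assms(2) unfolding height_le_def by simp
qed

locale rational_grid =
  fixes d l :: nat
  assumes d_pos: "0 < d" and l_pos: "0 < l"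
begin

lemma grid_pos: "(0::rat) < of_nat (d * l ^ i)"
  using d_pos l_pos by simp

lemma height_le_iff: "(\<exists>k::int. v = of_int k / of_nat (d * l ^ i)) \<longleftrightarrow> height_le d l v i"
proof -
  have "(v = of_int k / of_nat (d * l ^ i)) \<longleftrightarrow> v * of_nat (d * l ^ i) = of_int k" for k
    using grid_pos[of i] by (simp add: eq_divide_eq del: of_nat_mult)
  then show ?thesis unfolding height_le_def Ints_def by auto
qed

lemma Zdl_iff: "v \<in> Zdl d l \<longleftrightarrow> (\<exists>i. height_le d l v i)"
  unfolding Zdl_def using height_le_iff by blast

lemma hgt_eq: "hgt d l v = (LEAST i. height_le d l v i)"
  unfolding hgt_def height_le_iff ..

lemma height_le_hgt: "height_le d l v i \<Longrightarrow> height_le d l v (hgt d l v)"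
  unfolding hgt_eq by (rule LeastI)

lemma hgt_le: "height_le d l v i \<Longrightarrow> hgt d l v \<le> i"
  unfolding hgt_eq by (rule Least_le)

lemma grid_gap:
  assumes "height_le d l u m" "height_le d l w m" "u < w"
  shows "1 / of_nat (d * l ^ m) \<le> w - u"
proof -
  have "(w - u) * of_nat (d * l ^ m) \<in> \<int>"
    using assms(1,2) unfolding height_le_def by (simp add: left_diff_distrib)
  then obtain k where k: "(w - u) * of_nat (d * l ^ m) = of_int k" by (rule Ints_cases)
  moreover have "0 < (w - u) * of_nat (d * l ^ m)" using assms(3) grid_pos by simp
  ultimately have "1 \<le> (w - u) * of_nat (d * l ^ m)" by simp
  then show ?thesis using grid_pos[of m] by (simp add: divide_le_eq)
qed

end

locale mahler_setting = mahler_operator a l n + rational_grid d l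
  for a :: "nat \<Rightarrow> 'a::field poly" and l n d :: nat +
  assumes slopes_in_grid: "\<forall>\<mu>\<in>slopes l n a. \<exists>k::int. of_nat d * \<mu> = of_int k"
begin

abbreviation ht :: "rat \<Rightarrow> nat" where
  "ht \<equiv> hgt d l"

abbreviation \<tau> :: rat where
  "\<tau> \<equiv> tau l n a d"

lemma V_in_grid: "v \<in> V \<Longrightarrow> height_le d l v (ht v)"
proof -
  have "\<exists>i. height_le d l v i" if "v \<in> Vseq l n a k" for k v
    using that
  proof (induction k arbitrary: v)
    case 0
    then have "- v \<in> slopes l n a" using breakpoint_imp_slope[of "- v"] Vseq_0 by simp
    then obtain k where "of_nat d * (- v) = of_int k" using slopes_in_grid by blast
    then have "v * of_nat (d * l ^ 0) = of_int (- k)" by (simp add: algebra_simps)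
    then have "height_le d l v 0" unfolding height_le_def by (metis Ints_of_int)
    then show ?case by blast
  next
    case (Suc k)
    then obtain u p where u: "u \<in> Vseq l n a k" "p \<in> pts" "v = advance p u"
      unfolding Vseq_Suc by blast
    obtain m where m: "height_le d l u m" using Suc.IH[OF u(1)] by blast
    obtain q where "active v q" "weight v q = weight u p"
      using active_advance unfolding u(3) by blast
    moreover obtain t where "fst q = l ^ t" using pts_fst \<open>active v q\<close> unfolding active_def by blast
    ultimately have "v * of_nat (l ^ t) + of_nat (snd q) = u * of_nat (fst p) + of_nat (snd p)"
      unfolding weight_def by simp
    then show ?case using height_le_step m by blast
  qed
  then show "v \<in> V \<Longrightarrow> height_le d l v (ht v)" unfolding V_eq using height_le_hgt by blast
qed

section \<open>The constant \<open>\<tau>\<close>\<close>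

definition slope_gaps :: "rat set" where
  "slope_gaps = {e. \<exists>\<mu>\<in>slopes l n a. eps l n a (- \<mu>) = Some e}"

lemma finite_tau_candidates: "finite ({1 / of_nat (d * l ^ n)} \<union> slope_gaps)"
proof -
  have "slope_gaps \<subseteq> (\<lambda>\<mu>. the (eps l n a (- \<mu>))) ` slopes l n a"
    unfolding slope_gaps_def by force
  then show ?thesis using finite_slopes finite_subset by blast
qed

lemma tau_eq: "\<tau> = Min ({1 / of_nat (d * l ^ n)} \<union> slope_gaps)"
  unfolding tau_def slope_gaps_def ..

lemma tau_pos: "0 < \<tau>"
proof -
  have "\<tau> \<in> {1 / of_nat (d * l ^ n)} \<union> slope_gaps"
    unfolding tau_eq using finite_tau_candidates by (intro Min_in) auto
  then show ?thesis using eps_pos grid_pos[of n] unfolding slope_gaps_def by auto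
qed

lemma tau_le_grid: "\<tau> \<le> 1 / of_nat (d * l ^ n)"
  unfolding tau_eq using finite_tau_candidates by (intro Min_le) auto

lemma tau_le_pow: "t \<le> n \<Longrightarrow> \<tau> \<le> 1 / of_nat (l ^ t)"
proof -
  assume "t \<le> n"
  then have "l ^ t \<le> l ^ n" using l_pos by (simp add: power_increasing)
  also have "\<dots> \<le> d * l ^ n" using d_pos by simp
  finally have "l ^ t \<le> d * l ^ n" .
  then have "1 / of_nat (d * l ^ n) \<le> (1 / of_nat (l ^ t) :: rat)"
    using d_pos l_pos by (intro divide_left_mono) (simp_all del: of_nat_mult of_nat_power)
  then show ?thesis using tau_le_grid by linarith
qed

lemma tau_le_dist_breakpoint:
  assumes "b \<in> breakpoints" "w \<in> V" "b < w"
  shows "\<tau> \<le> w - b"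
proof -
  obtain z where z: "eps l n a b = Some (z - b)" "z \<le> w"
    using eps_least_above[OF assms(2,3)] by blast
  moreover have "- b \<in> slopes l n a" using breakpoint_imp_slope[of "- b"] assms(1) by simp
  ultimately have "z - b \<in> slope_gaps" unfolding slope_gaps_def by force
  then have "\<tau> \<le> z - b" unfolding tau_eq using finite_tau_candidates by (intro Min_le) auto
  then show ?thesis using z(2) by simp
qed

lemma ht_advance_lower:
  assumes u: "u \<in> V" and p: "p \<in> pts"
  shows "ht u \<le> ht (advance p u) + n"
proof (rule ccontr)
  let ?w = "advance p u"
  assume "\<not> ?thesis"
  then have lt: "ht ?w + n < ht u" by simp
  obtain q where q: "active ?w q" "weight ?w q = weight u p" by (rule active_advance)
  obtain t where t: "fst q = l ^ t" using pts_fst q(1) unfolding active_def by blast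
  obtain i where i: "i \<le> n" "fst p = l ^ i" using pts_fst[OF p] by blast
  have eq: "u * of_nat (l ^ i) + of_nat (snd p) = ?w * of_nat (l ^ t) + of_nat (snd q)"
    using q(2) t i(2) unfolding weight_def by simp
  define k where "k = ht u - 1 - i"
  have "height_le d l ?w (t + k)"
    using V_in_grid[OF advance_in_V[OF u p]] lt i(1) unfolding k_def
    by (elim height_le_mono) linarith
  then have "height_le d l u (i + k)" by (rule height_le_shift[OF eq])
  then have "ht u \<le> i + k" by (rule hgt_le)
  then show False using lt i(1) unfolding k_def by linarith
qed

lemma advance_common_active:
  assumes "active u q" "active (advance p u) q"
  shows "(advance p u - u) * of_nat (fst q) = weight u p - weight u q"
  using active_newton_min[OF assms(2)] newton_min_advance[of p u]
  unfolding weight_def by (simp add: algebra_simps)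

lemma progress_same_abscissa:
  assumes "active u q" "active (advance p u) q" "u < advance p u" "fst p = fst q"
  shows "\<tau> \<le> advance p u - u"
proof -
  let ?w = "advance p u"
  obtain t where t: "t \<le> n" "fst q = l ^ t" using pts_fst assms(1) unfolding active_def by blast
  have X: "(0::rat) < of_nat (fst q)" using pts_fst_pos assms(1) unfolding active_def by simp
  have "(?w - u) * of_nat (fst q) = of_nat (snd p) - of_nat (snd q)"
    using advance_common_active[OF assms(1,2)] assms(4) unfolding weight_def by simp
  moreover have "0 < (?w - u) * of_nat (fst q)" using assms(3) X by simp
  ultimately have "1 \<le> (?w - u) * of_nat (fst q)" by simp
  then have "1 / of_nat (l ^ t) \<le> ?w - u" using X t(2) by (simp add: divide_le_eq)
  then show ?thesis using tau_le_pow[OF t(1)] by linarith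
qed

lemma tau_le_excess:
  assumes b: "b \<in> breakpoints" "active b q" and p: "p \<in> pts"
    and excess: "0 < weight b p - weight b q"
    and w: "active w q" "advance p b \<le> w"
  shows "\<tau> * of_nat (fst q) \<le> weight b p - weight b q"
proof -
  let ?w' = "advance p b"
  have "newton_min b < newton_min ?w'"
    using excess active_newton_min[OF b(2)] newton_min_advance[of p b] by simp
  then have b_w': "b < ?w'" using newton_min_le_iff[of ?w' b] by linarith
  then have "active ?w' q" using active_between[OF b(2) w(1)] w(2) by simp
  then have "weight b p - weight b q = (?w' - b) * of_nat (fst q)"
    using advance_common_active[OF b(2)] by simp
  moreover have "\<tau> \<le> ?w' - b"
    using tau_le_dist_breakpoint[OF b(1) advance_in_V[OF _ p] b_w'] breakpoints_subset_V b(1) by blast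
  ultimately show ?thesis by (simp add: mult_right_mono)
qed

lemma progress_right:
  assumes u: "u \<in> V" and p: "p \<in> pts" and q: "active u q" "active (advance p u) q"
    and lt: "u < advance p u" and right: "fst q < fst p"
  shows "\<tau> \<le> advance p u - u"
proof -
  let ?w = "advance p u" and ?D = "\<lambda>v. weight v p - weight v q"
  obtain b r where b: "b \<le> u" "active b q" "active b r" "fst q < fst r"
    using left_breakpoint[OF q(1) p right] by blast
  have b_bp: "b \<in> breakpoints" using b(2-4) unfolding breakpoints_def by fastforce
  have X: "(0::rat) < of_nat (fst q)" using pts_fst_pos q(1) unfolding active_def by simp
  have D_u: "?D u = ?D b + (u - b) * (of_nat (fst p) - of_nat (fst q))"
    by (rule weight_diff_shift)
  have shift_nonneg: "0 \<le> (u - b) * (of_nat (fst p) - of_nat (fst q))"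
    using b(1) right by simp
  have "0 \<le> ?D b" using b(2) p unfolding active_def by simp
  then consider "0 < ?D b" | "?D b = 0" by linarith
  then show ?thesis
  proof cases
    case 1
    have "\<tau> * of_nat (fst q) \<le> ?D b"
      using tau_le_excess[OF b_bp b(2) p 1 q(2) advance_mono[OF b(1)]] .
    also have "\<dots> \<le> (?w - u) * of_nat (fst q)"
      using advance_common_active[OF q] D_u shift_nonneg by simp
    finally show ?thesis using X by simp
  next
    case 2
    have "2 * fst q \<le> fst p" using pts_fst_double p q(1) right unfolding active_def by blast
    then have "of_nat (fst q) \<le> (of_nat (fst p) - of_nat (fst q) :: rat)" by simp
    moreover have "(?w - u) * of_nat (fst q) = (u - b) * (of_nat (fst p) - of_nat (fst q))"
      using advance_common_active[OF q] D_u 2 by simp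
    moreover have "0 < (?w - u) * of_nat (fst q)" using lt X by simp
    ultimately have "b < u" and "(u - b) * of_nat (fst q) \<le> (?w - u) * of_nat (fst q)"
      using right by (simp_all add: zero_less_mult_iff mult_left_mono)
    then show ?thesis using tau_le_dist_breakpoint[OF b_bp u] X by simp
  qed
qed

lemma progress_left:
  assumes u: "u \<in> V" and p: "p \<in> pts" and q: "active u q" "active (advance p u) q"
    and lt: "u < advance p u" and left: "fst p < fst q"
  shows "\<tau> \<le> advance p u - u \<or> ht u < ht (advance p u)"
proof -
  let ?w = "advance p u"
  have w: "?w \<in> V" using advance_in_V[OF u p] .
  obtain i t where it: "fst p = l ^ i" "fst q = l ^ t" "i \<le> n" "t \<le> n"
    using pts_fst p q(1) unfolding active_def by blast
  then have "i < t" using left l_ge_2 by (simp add: power_strict_increasing_iff)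
  have "weight ?w q = weight u p"
    using active_newton_min[OF q(2)] newton_min_advance by simp
  then have eq: "?w * of_nat (l ^ t) + of_nat (snd q) = u * of_nat (l ^ i) + of_nat (snd p)"
    and eq': "u * of_nat (l ^ i) + of_nat (snd p) = ?w * of_nat (l ^ t) + of_nat (snd q)"
    using it unfolding weight_def by simp_all
  show ?thesis
  proof (cases "ht u \<le> i")
    case True
    then have hu: "height_le d l u (i + 0)" using V_in_grid[OF u] height_le_mono by simp
    then have "height_le d l ?w (t + 0)" by (rule height_le_shift[OF eq])
    then have "height_le d l ?w n" using it(4) height_le_mono by simp
    moreover have "height_le d l u n" using hu it(3) height_le_mono by simp
    ultimately have "1 / of_nat (d * l ^ n) \<le> ?w - u" using grid_gap lt by blast
    then show ?thesis using tau_le_grid by simp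
  next
    case False
    have "ht u < ht ?w"
    proof (rule ccontr)
      assume "\<not> ht u < ht ?w"
      then have "height_le d l ?w (t + (ht u - 1 - i))"
        using V_in_grid[OF w] \<open>i < t\<close> False by (elim height_le_mono) linarith
      then have "height_le d l u (i + (ht u - 1 - i))" by (rule height_le_shift[OF eq'])
      then show False using hgt_le False by fastforce
    qed
    then show ?thesis by simp
  qed
qed

lemma progress:
  assumes u: "u \<in> V" and p: "p \<in> pts" and lt: "u < advance p u"
  shows "\<tau> \<le> advance p u - u \<or> ht u < ht (advance p u)"
proof (cases "\<exists>b\<in>breakpoints. u < b \<and> b < advance p u")
  case True
  then obtain b where "b \<in> breakpoints" "u < b" "b < advance p u" by blast
  then show ?thesis using tau_le_dist_breakpoint[OF _ advance_in_V[OF u p]] by fastforce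
next
  case False
  then obtain q where q: "active u q" "active (advance p u) q"
    using common_active[OF lt] by blast
  consider "fst p = fst q" | "fst q < fst p" | "fst p < fst q" by linarith
  then show ?thesis
    using progress_same_abscissa[OF q lt] progress_right[OF u p q lt] progress_left[OF u p q lt] by cases auto
qed

definition potential :: "rat \<Rightarrow> rat" where
  "potential v = (of_nat n + 1) * (v + Max (slopes l n a)) / \<tau> + of_nat (ht v)"

lemma iota_eq_potential: "iota l n a d v = nat \<lfloor>potential v\<rfloor>"
  unfolding iota_def potential_def ..

lemma potential_nonneg: "v \<in> V \<Longrightarrow> 0 \<le> potential v"
  unfolding potential_def using V_ge_neg_max_slope[of v] tau_pos by simp

lemma potential_advance:
  assumes u: "u \<in> V" and p: "p \<in> pts" and lt: "u < advance p u"
  shows "potential u + 1 \<le> potential (advance p u)"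
proof -
  let ?w = "advance p u" and ?A = "(of_nat n + 1) / \<tau>"
  have A: "0 < ?A" using tau_pos by simp
  have "potential ?w - potential u = ?A * (?w - u) + (of_nat (ht ?w) - of_nat (ht u))"
    unfolding potential_def by (simp add: algebra_simps add_divide_distrib diff_divide_distrib)
  moreover from progress[OF u p lt] have "1 \<le> ?A * (?w - u) + (of_nat (ht ?w) - of_nat (ht u))"
  proof
    assume "\<tau> \<le> ?w - u"
    then have "1 \<le> (?w - u) / \<tau>" using tau_pos by simp
    then have "(of_nat n + 1) * 1 \<le> (of_nat n + 1) * ((?w - u) / \<tau>)"
      by (intro mult_left_mono) simp_all
    then have "of_nat n + 1 \<le> ?A * (?w - u)" by simp
    moreover have "of_nat (ht u) \<le> (of_nat (ht ?w) + of_nat n :: rat)"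
      using ht_advance_lower[OF u p] by (simp flip: of_nat_add)
    ultimately show ?thesis by linarith
  next
    assume "ht u < ht ?w"
    then have "1 \<le> (of_nat (ht ?w) - of_nat (ht u) :: rat)" by simp
    moreover have "0 < ?A * (?w - u)" using A lt by (intro mult_pos_pos) simp_all
    ultimately show ?thesis by linarith
  qed
  ultimately show ?thesis by simp
qed

lemma Vseq_within_potential:
  "v \<in> Vseq l n a k \<Longrightarrow> \<exists>m. v \<in> Vseq l n a m \<and> of_nat m \<le> potential v"
proof (induction k arbitrary: v)
  case 0
  then have "0 \<le> potential v" using potential_nonneg V_eq by blast
  then show ?case using 0 by (intro exI[of _ 0]) simp
next
  case (Suc k)
  then obtain u p where u: "u \<in> Vseq l n a k" "p \<in> pts" "v = advance p u"
    unfolding Vseq_Suc by blast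
  obtain m where m: "u \<in> Vseq l n a m" "of_nat m \<le> potential u" using Suc.IH[OF u(1)] by blast
  show ?case
  proof (cases "u < v")
    case True
    have "v \<in> Vseq l n a (Suc m)" using m(1) u(2,3) unfolding Vseq_Suc by blast
    moreover have "of_nat (Suc m) \<le> potential v"
      using potential_advance[of u p] u m(2) True V_eq by fastforce
    ultimately show ?thesis by blast
  next
    case False
    then have "v = u" using le_advance[OF u(2), of u] u(3) by simp
    then show ?thesis using m by blast
  qed
qed

end

theorem mainTheorem11:
  fixes a :: "nat \<Rightarrow> 'a::field poly" and l n d :: nat and v :: rat
  assumes "l \<ge> 2" and "n \<ge> 1" and "a 0 \<noteq> 0" and "a n \<noteq> 0"
    and "d \<ge> 1" and "\<forall>\<mu>\<in>slopes l n a. \<exists>k::int. of_nat d * \<mu> = of_int k"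
  shows "v \<in> Vall l n a \<longleftrightarrow>
           (v \<in> Zdl d l \<and> v \<ge> - Max (slopes l n a) \<and> v \<in> Vseq l n a (iota l n a d v))"
proof -
  interpret mahler_setting a l n d
    using assms by unfold_locales auto
  show ?thesis
  proof
    assume v: "v \<in> Vall l n a"
    then obtain k where "v \<in> Vseq l n a k" using V_eq by blast
    then obtain m where m: "v \<in> Vseq l n a m" "of_nat m \<le> potential v"
      using Vseq_within_potential by blast
    then have "int m \<le> \<lfloor>potential v\<rfloor>" by (simp add: le_floor_iff)
    then have "m \<le> iota l n a d v" unfolding iota_eq_potential by linarith
    then have "v \<in> Vseq l n a (iota l n a d v)" using Vseq_mono m(1) by blast
    moreover have "v \<in> Zdl d l" using V_in_grid[OF v] Zdl_iff by blast
    ultimately show "v \<in> Zdl d l \<and> - Max (slopes l n a) \<le> v \<and> v \<in> Vseq l n a (iota l n a d v)"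
      using V_ge_neg_max_slope[OF v] by blast
  qed (use V_eq in blast)
qed

end
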